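(* Let $X\subseteq[U]$ be a set of $k$ keys. Let $p>4U^2$ be a prime and $m\le U$ a positive integer, and let $h(x)=((\sigma x+\tau)\bmod p)\bmod m$ where $\sigma,\tau\in[p]$ are chosen independently and uniformly at random. Fix a key $x\notin X$ and buckets $a,b\in[m]$. Let $y,z\in X$ be chosen independently and uniformly at random (independently of $h$). Then $$\Pr\big(h(y)=h(z)=b \;\big|\; h(x)=a\big)\le \frac{1}{m^2}+O\!\left(\frac{U\log U}{mk^2}\right).$$
   Context: $[N]=\{0,1,\dots,N-1\}$. The probability is over the joint randomness of $\sigma,\tau,y,z$. The $O(\cdot)$ hides an absolute constant. *)

theory Defs
  imports "HOL-Computational_Algebra.Primes" Complex_Main
begin

definition hsh :: "nat \<Rightarrow> nat \<Rightarrow> nat \<Rightarrow> nat \<Rightarrow> nat \<Rightarrow> nat" where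
  "hsh p m \<sigma> \<tau> x = ((\<sigma> * x + \<tau>) mod p) mod m"

text \<open>Sample space: (sigma, tau, y, z) uniform on [p] x [p] x X x X.
  Conditional probability under the uniform distribution on a finite space
  = |A \<inter> B| / |B|.\<close>
definition cond_prob_hash :: "nat \<Rightarrow> nat \<Rightarrow> nat set \<Rightarrow> nat \<Rightarrow> nat \<Rightarrow> nat \<Rightarrow> real" where
  "cond_prob_hash p m X x a b =
     real (card {(\<sigma>, \<tau>, y, z). \<sigma> \<in> {..<p} \<and> \<tau> \<in> {..<p} \<and> y \<in> X \<and> z \<in> X \<and>
                  hsh p m \<sigma> \<tau> x = a \<and> hsh p m \<sigma> \<tau> y = b \<and> hsh p m \<sigma> \<tau> z = b})
     / real (card {(\<sigma>, \<tau>, y, z). \<sigma> \<in> {..<p} \<and> \<tau> \<in> {..<p} \<and> y \<in> X \<and> z \<in> X \<and>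
                  hsh p m \<sigma> \<tau> x = a})"

end

theory Submission
  imports Defs "HOL-Analysis.Harmonic_Numbers"
begin

lemma sum_le_sum_disjoint_blocks:
  fixes f :: "'a \<Rightarrow> real"
  assumes "finite I" and nonneg: "\<And>l. l \<in> I \<Longrightarrow> 0 \<le> f l"
    and sub: "\<And>q. q \<in> S \<Longrightarrow> B q \<subseteq> I" and card: "\<And>q. q \<in> S \<Longrightarrow> card (B q) = n"
    and disj: "\<And>q q'. q \<in> S \<Longrightarrow> q' \<in> S \<Longrightarrow> q \<noteq> q' \<Longrightarrow> B q \<inter> B q' = {}"
    and low: "\<And>q l. q \<in> S \<Longrightarrow> l \<in> B q \<Longrightarrow> f q \<le> f l"
  shows "real n * (\<Sum>q\<in>S. f q) \<le> (\<Sum>l\<in>I. f l)"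
proof (cases "finite S")
  case True
  have fin: "\<forall>q\<in>S. finite (B q)" using sub finite_subset[OF _ \<open>finite I\<close>] by blast
  have "real n * (\<Sum>q\<in>S. f q) = (\<Sum>q\<in>S. \<Sum>l\<in>B q. f q)"
    using card by (simp add: sum_distrib_left mult.commute)
  also have "\<dots> \<le> (\<Sum>q\<in>S. \<Sum>l\<in>B q. f l)"
    by (intro sum_mono low)
  also have "\<dots> = (\<Sum>l\<in>(\<Union>q\<in>S. B q). f l)"
    using True fin disj by (simp add: sum.UNION_disjoint)
  also have "\<dots> \<le> (\<Sum>l\<in>I. f l)"
    using sub nonneg by (intro sum_mono2 \<open>finite I\<close>) auto
  finally show ?thesis .
next
  case False
  then show ?thesis using nonneg by (simp add: sum_nonneg)
qed

lemma mod_eq_less_imp_add_le: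
  fixes q q' p :: int
  assumes "q mod p = q' mod p" and "q < q'"
  shows "q + p \<le> q'"
proof -
  have "p dvd q' - q"
    using mod_eq_dvd_iff[of q' p q] assms(1) by simp
  then show ?thesis
    using \<open>q < q'\<close> zdvd_imp_le by fastforce
qed

text \<open>By quasiconcavity, every point q of the progression other than the maximum point c is
  dominated by f on the p consecutive integers from q towards c, and these blocks are disjoint.\<close>

lemma sum_progression_remove_max_le:
  fixes f :: "int \<Rightarrow> real"
  assumes nonneg: "\<And>l. 0 \<le> f l"
    and quasiconcave: "\<And>a b c. a \<le> b \<Longrightarrow> b \<le> c \<Longrightarrow> min (f a) (f c) \<le> f b"
    and "p > 0" and S: "S = {l \<in> {lo..hi}. l mod p = K mod p}"
    and "c \<in> S" and c_max: "\<And>q. q \<in> S \<Longrightarrow> f q \<le> f c"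
  shows "of_int p * (\<Sum>q\<in>S - {c}. f q) \<le> (\<Sum>l\<in>{lo..hi}. f l)"
proof -
  have spaced: "q + p \<le> q'" if "q \<in> S" "q' \<in> S" "q < q'" for q q'
    using that by (intro mod_eq_less_imp_add_le) (auto simp: S)
  define B where "B q = (if q < c then {q..q + p - 1} else {q - p + 1..q})" for q
  have "real (nat p) * (\<Sum>q\<in>S - {c}. f q) \<le> (\<Sum>l\<in>{lo..hi}. f l)"
  proof (rule sum_le_sum_disjoint_blocks)
    fix q assume q: "q \<in> S - {c}"
    have gap: "q < c \<Longrightarrow> q + p \<le> c" "c < q \<Longrightarrow> c + p \<le> q"
      using spaced q \<open>c \<in> S\<close> by auto
    then show "B q \<subseteq> {lo..hi}" "card (B q) = nat p"
      using q \<open>c \<in> S\<close> by (auto simp: B_def S)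
    show "f q \<le> f l" if "l \<in> B q" for l
      using that gap quasiconcave[of q l c] quasiconcave[of c l q] c_max[of q] q
      by (auto simp: B_def split: if_splits)
  next
    fix q q' assume "q \<in> S - {c}" "q' \<in> S - {c}" "q \<noteq> q'"
    then show "B q \<inter> B q' = {}"
      using spaced[of q q'] spaced[of q' q] spaced[of q c] spaced[of c q]
        spaced[of q' c] spaced[of c q'] \<open>c \<in> S\<close>
      by (cases "q < q'") (auto simp: B_def)
  qed (use nonneg in simp_all)
  then show ?thesis
    using \<open>p > 0\<close> by simp
qed

lemma sum_progression_le:
  fixes f :: "int \<Rightarrow> real"
  assumes nonneg: "\<And>l. 0 \<le> f l"
    and quasiconcave: "\<And>a b c. a \<le> b \<Longrightarrow> b \<le> c \<Longrightarrow> min (f a) (f c) \<le> f b"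
    and bounded: "\<And>l. f l \<le> M" and "p > 0"
  shows "of_int p * (\<Sum>l | l \<in> {lo..hi} \<and> l mod p = K mod p. f l)
           \<le> (\<Sum>l\<in>{lo..hi}. f l) + of_int p * M"
proof -
  define S where "S = {l \<in> {lo..hi}. l mod p = K mod p}"
  have "finite S"
    unfolding S_def by (rule finite_subset[of _ "{lo..hi}"]) auto
  have "of_int p * (\<Sum>l\<in>S. f l) \<le> (\<Sum>l\<in>{lo..hi}. f l) + of_int p * M"
  proof (cases "S = {}")
    case True
    have "0 \<le> M"
      using nonneg[of 0] bounded[of 0] by linarith
    then show ?thesis
      using True nonneg \<open>p > 0\<close> by (simp add: sum_nonneg)
  next
    case False
    have "Max (f ` S) \<in> f ` S"
      using \<open>finite S\<close> False by simp
    then obtain c where "c \<in> S" and "f c = Max (f ` S)"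
      by auto
    then have "of_int p * (\<Sum>q\<in>S - {c}. f q) \<le> (\<Sum>l\<in>{lo..hi}. f l)"
      using \<open>finite S\<close> by (intro sum_progression_remove_max_le[OF nonneg quasiconcave \<open>p > 0\<close> S_def]) auto
    moreover have "of_int p * (\<Sum>q\<in>S. f q) = of_int p * f c + of_int p * (\<Sum>q\<in>S - {c}. f q)"
      using \<open>finite S\<close> \<open>c \<in> S\<close> by (simp add: sum.remove distrib_left)
    moreover have "of_int p * f c \<le> of_int p * M"
      using bounded[of c] \<open>p > 0\<close> by simp
    ultimately show ?thesis
      by linarith
  qed
  then show ?thesis
    unfolding S_def .
qed

lemma card_int_progression_le:
  fixes F :: "int set" and \<alpha> \<beta> :: real
  assumes "s > 0" and "F \<noteq> {}"
    and dvd: "\<And>v w. v \<in> F \<Longrightarrow> w \<in> F \<Longrightarrow> s dvd v - w"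
    and bounds: "\<And>v. v \<in> F \<Longrightarrow> \<alpha> \<le> of_int v \<and> of_int v \<le> \<beta>"
  shows "real (card F) \<le> (\<beta> - \<alpha>) / of_int s + 1"
proof -
  have "finite F"
  proof (rule finite_subset)
    show "F \<subseteq> {\<lceil>\<alpha>\<rceil>..\<lfloor>\<beta>\<rfloor>}"
      using bounds by (auto simp: ceiling_le_iff le_floor_iff)
  qed simp
  define v0 where "v0 = Min F"
  define v1 where "v1 = Max F"
  have "v0 \<in> F" "v1 \<in> F" and range: "\<And>v. v \<in> F \<Longrightarrow> v0 \<le> v \<and> v \<le> v1"
    using \<open>finite F\<close> \<open>F \<noteq> {}\<close> by (simp_all add: v0_def v1_def)
  define n where "n = (v1 - v0) div s"
  have "F \<subseteq> (\<lambda>t. v0 + s * t) ` {0..n}"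
  proof
    fix v assume "v \<in> F"
    then obtain t where t: "v = v0 + s * t"
      using dvd[of v v0] \<open>v0 \<in> F\<close> by (metis dvdE add_diff_cancel_left' diff_add_cancel)
    have "0 \<le> s * t" "s * t \<le> v1 - v0"
      using t range[OF \<open>v \<in> F\<close>] by simp_all
    then have "0 \<le> t" "t \<le> n"
      using \<open>s > 0\<close> zdiv_mono1[of "s * t" "v1 - v0" s] by (simp_all add: n_def zero_le_mult_iff)
    then show "v \<in> (\<lambda>t. v0 + s * t) ` {0..n}"
      using t by auto
  qed
  then have "card F \<le> card {0..n}"
    using surj_card_le[of "{0..n}"] card_image_le card_mono by (meson finite_atLeastAtMost_int finite_imageI le_trans)
  moreover have "0 \<le> n"
    using range[OF \<open>v1 \<in> F\<close>] \<open>s > 0\<close> by (simp add: n_def pos_imp_zdiv_nonneg_iff)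
  ultimately have "real (card F) \<le> of_int n + 1"
    by simp
  also have "(of_int n :: real) \<le> of_int (v1 - v0) / of_int s"
    unfolding n_def by (metis floor_divide_of_int_eq of_int_floor_le)
  also have "\<dots> \<le> (\<beta> - \<alpha>) / of_int s"
    using bounds[OF \<open>v0 \<in> F\<close>] bounds[OF \<open>v1 \<in> F\<close>] \<open>s > 0\<close> by (simp add: divide_right_mono)
  finally show ?thesis by simp
qed

lemma card_int_progression_ge:
  fixes \<alpha> \<beta> :: real
  assumes "s > 0"
  shows "(\<beta> - \<alpha>) / of_int s - 1 \<le> real (card {v. \<alpha> \<le> of_int v \<and> of_int v \<le> \<beta> \<and> s dvd v - \<rho>})"
proof -
  define c1 where "c1 = \<lceil>(\<alpha> - of_int \<rho>) / of_int s\<rceil>"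
  define c2 where "c2 = \<lfloor>(\<beta> - of_int \<rho>) / of_int s\<rfloor>"
  let ?P = "{v. \<alpha> \<le> of_int v \<and> of_int v \<le> \<beta> \<and> s dvd v - \<rho>}"
  have "finite ?P"
    by (rule finite_subset[of _ "{\<lceil>\<alpha>\<rceil>..\<lfloor>\<beta>\<rfloor>}"]) (auto simp: ceiling_le_iff le_floor_iff)
  have "(\<lambda>t. \<rho> + s * t) ` {c1..c2} \<subseteq> ?P"
  proof clarify
    fix t assume "t \<in> {c1..c2}"
    then have "(\<alpha> - of_int \<rho>) / of_int s \<le> of_int t" "of_int t \<le> (\<beta> - of_int \<rho>) / of_int s"
      by (auto simp: c1_def c2_def ceiling_le_iff le_floor_iff)
    then have "\<alpha> - of_int \<rho> \<le> of_int s * of_int t" "of_int s * of_int t \<le> \<beta> - of_int \<rho>"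
      using \<open>s > 0\<close> by (simp_all add: divide_le_eq le_divide_eq mult.commute)
    then show "\<alpha> \<le> of_int (\<rho> + s * t) \<and> of_int (\<rho> + s * t) \<le> \<beta> \<and> s dvd \<rho> + s * t - \<rho>"
      by simp
  qed
  moreover have "inj_on (\<lambda>t. \<rho> + s * t) {c1..c2}"
    using \<open>s > 0\<close> by (simp add: inj_on_def)
  ultimately have "card {c1..c2} \<le> card ?P"
    using card_inj_on_le \<open>finite ?P\<close> by blast
  then have "real (card {c1..c2}) \<le> real (card ?P)"
    by simp
  moreover have "of_int (c2 - c1 + 1) \<le> real (card {c1..c2})"
    by simp
  moreover have "(\<beta> - \<alpha>) / of_int s = (\<beta> - of_int \<rho>) / of_int s - (\<alpha> - of_int \<rho>) / of_int s"
    by (simp add: diff_divide_distrib)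
  ultimately show ?thesis
    using ceiling_correct[of "(\<alpha> - of_int \<rho>) / of_int s"] floor_correct[of "(\<beta> - of_int \<rho>) / of_int s"]
    unfolding c1_def c2_def by linarith
qed

definition line_fiber :: "int \<Rightarrow> int \<Rightarrow> int \<Rightarrow> int \<Rightarrow> (int \<times> int) set" where
  "line_fiber r s N l = {(v, w). v \<in> {0..N-1} \<and> w \<in> {0..N-1} \<and> r * v - s * w = l}"

definition fiber_lo :: "int \<Rightarrow> int \<Rightarrow> real" where
  "fiber_lo r l = max 0 (of_int l / of_int r)"

definition fiber_hi :: "int \<Rightarrow> int \<Rightarrow> int \<Rightarrow> int \<Rightarrow> real" where
  "fiber_hi r s N l = min (of_int (N - 1)) ((of_int l + of_int s * of_int (N - 1)) / of_int r)"

definition fiber_estimate :: "int \<Rightarrow> int \<Rightarrow> int \<Rightarrow> int \<Rightarrow> real" where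
  "fiber_estimate r s N l =
     (if fiber_lo r l \<le> fiber_hi r s N l then (fiber_hi r s N l - fiber_lo r l) / of_int s + 1 else 0)"

lemma of_int_divide_le_of_int_iff:
  assumes "r > 0"
  shows "of_int l / of_int r \<le> (of_int v :: real) \<longleftrightarrow> l \<le> r * v"
proof -
  have "of_int l / of_int r \<le> (of_int v :: real) \<longleftrightarrow> (of_int l :: real) \<le> of_int (r * v)"
    using \<open>r > 0\<close> by (simp add: pos_divide_le_eq mult.commute)
  then show ?thesis
    by (simp only: of_int_le_iff)
qed

lemma of_int_le_divide_of_int_iff:
  assumes "r > 0"
  shows "(of_int v :: real) \<le> of_int t / of_int r \<longleftrightarrow> r * v \<le> t"
proof -
  have "(of_int v :: real) \<le> of_int t / of_int r \<longleftrightarrow> (of_int (r * v) :: real) \<le> of_int t"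
    using \<open>r > 0\<close> by (simp add: pos_le_divide_eq mult.commute)
  then show ?thesis
    by (simp only: of_int_le_iff)
qed

lemma card_line_fiber_eq:
  assumes "r > 0" and "s > 0"
  shows "card (line_fiber r s N l) =
           card {v. fiber_lo r l \<le> of_int v \<and> of_int v \<le> fiber_hi r s N l \<and> s dvd r * v - l}"
    (is "_ = card ?V")
proof -
  have lower: "of_int l / of_int r \<le> (of_int v :: real) \<longleftrightarrow> 0 \<le> r * v - l" for v
    using of_int_divide_le_of_int_iff[OF \<open>r > 0\<close>] by simp
  have upper: "(of_int v :: real) \<le> (of_int l + of_int s * of_int (N - 1)) / of_int r
                 \<longleftrightarrow> r * v - l \<le> s * (N - 1)" for v
    using of_int_le_divide_of_int_iff[OF \<open>r > 0\<close>, of v "l + s * (N - 1)"] by (simp add: diff_le_eq add.commute)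
  have "inj_on fst (line_fiber r s N l)"
    using \<open>s > 0\<close> by (auto simp: inj_on_def line_fiber_def)
  moreover have "fst ` line_fiber r s N l = ?V"
  proof (intro equalityI subsetI)
    fix v assume "v \<in> fst ` line_fiber r s N l"
    then obtain w where "w \<in> {0..N-1}" "v \<in> {0..N-1}" "r * v - s * w = l"
      by (auto simp: line_fiber_def)
    moreover have "0 \<le> s * w" "s * w \<le> s * (N - 1)"
      using \<open>s > 0\<close> \<open>w \<in> {0..N-1}\<close> by simp_all
    ultimately show "v \<in> ?V"
      using lower upper by (force simp: fiber_lo_def fiber_hi_def)
  next
    fix v assume "v \<in> ?V"
    then obtain w where w: "r * v - l = s * w"
      by (auto elim: dvdE)
    have "0 \<le> s * w" "s * w \<le> s * (N - 1)" "0 \<le> v" "v \<le> N - 1"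
      using \<open>v \<in> ?V\<close> lower upper w by (auto simp: fiber_lo_def fiber_hi_def)
    then have "(v, w) \<in> line_fiber r s N l"
      using \<open>s > 0\<close> w by (auto simp: line_fiber_def zero_le_mult_iff)
    then show "v \<in> fst ` line_fiber r s N l"
      by force
  qed
  ultimately show ?thesis
    using card_image by fastforce
qed

lemma card_line_fiber_le_estimate:
  assumes "r > 0" and "s > 0" and "coprime r s"
  shows "real (card (line_fiber r s N l)) \<le> fiber_estimate r s N l"
proof -
  define \<alpha> where "\<alpha> = fiber_lo r l"
  define \<beta> where "\<beta> = fiber_hi r s N l"
  define V where "V = {v. \<alpha> \<le> of_int v \<and> of_int v \<le> \<beta> \<and> s dvd r * v - l}"
  have card: "card (line_fiber r s N l) = card V"
    unfolding V_def \<alpha>_def \<beta>_def by (rule card_line_fiber_eq[OF assms(1,2)])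
  show ?thesis
  proof (cases "V = {}")
    case False
    have "s dvd v - w" if "v \<in> V" "w \<in> V" for v w
    proof -
      have "s dvd (r * v - l) - (r * w - l)"
        by (rule dvd_diff) (use that in \<open>simp_all add: V_def\<close>)
      then have "s dvd r * (v - w)"
        by (simp add: algebra_simps)
      then show ?thesis
        using \<open>coprime r s\<close> by (simp add: coprime_commute coprime_dvd_mult_right_iff)
    qed
    then have "real (card V) \<le> (\<beta> - \<alpha>) / of_int s + 1"
      using card_int_progression_le[OF \<open>s > 0\<close> False] by (auto simp: V_def)
    moreover have "\<alpha> \<le> \<beta>"
      using False by (auto simp: V_def)
    ultimately show ?thesis
      by (simp add: card fiber_estimate_def \<alpha>_def \<beta>_def)
  qed (use \<open>s > 0\<close> in \<open>simp add: card fiber_estimate_def \<alpha>_def \<beta>_def\<close>)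
qed

lemma fiber_estimate_le_card:
  assumes "r > 0" and "s > 0" and "coprime r s"
  shows "fiber_estimate r s N l \<le> real (card (line_fiber r s N l)) + 2"
proof -
  define \<alpha> where "\<alpha> = fiber_lo r l"
  define \<beta> where "\<beta> = fiber_hi r s N l"
  define V where "V = {v. \<alpha> \<le> of_int v \<and> of_int v \<le> \<beta> \<and> s dvd r * v - l}"
  have card: "card (line_fiber r s N l) = card V"
    unfolding V_def \<alpha>_def \<beta>_def by (rule card_line_fiber_eq[OF assms(1,2)])
  obtain u w where "u * r + w * s = 1"
    using bezout_int[of r s] \<open>coprime r s\<close> by (auto simp: coprime_iff_gcd_eq_1)
  then have "r * v - l = r * (v - u * l) + s * (- w * l)" for v
  proof -
    have "r * (v - u * l) + s * (- w * l) = r * v - (u * r + w * s) * l"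
      by (simp add: algebra_simps)
    then show ?thesis
      using \<open>u * r + w * s = 1\<close> by simp
  qed
  then have "{v. \<alpha> \<le> of_int v \<and> of_int v \<le> \<beta> \<and> s dvd v - u * l} \<subseteq> V"
    by (auto simp: V_def)
  moreover have "finite V"
    by (rule finite_subset[of _ "{\<lceil>\<alpha>\<rceil>..\<lfloor>\<beta>\<rfloor>}"]) (auto simp: V_def ceiling_le_iff le_floor_iff)
  ultimately have "real (card {v. \<alpha> \<le> of_int v \<and> of_int v \<le> \<beta> \<and> s dvd v - u * l}) \<le> real (card V)"
    by (simp add: card_mono)
  then have "(\<beta> - \<alpha>) / of_int s - 1 \<le> real (card V)"
    using card_int_progression_ge[OF \<open>s > 0\<close>, of \<beta> \<alpha> "u * l"] by linarith
  then show ?thesis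
    by (simp add: card fiber_estimate_def \<alpha>_def \<beta>_def)
qed

lemma fiber_estimate_quasiconcave:
  assumes "r > 0" and "s > 0" and "a \<le> b" and "b \<le> c"
  shows "min (fiber_estimate r s N a) (fiber_estimate r s N c) \<le> fiber_estimate r s N b"
proof -
  define L where "L l = (of_int l / of_int r :: real)" for l
  define U where "U l = (of_int l + of_int s * of_int (N - 1)) / (of_int r :: real)" for l
  have mono: "L a \<le> L b" "L b \<le> L c" "U a \<le> U b" "U b \<le> U c"
    using assms by (simp_all add: L_def U_def divide_right_mono)
  have width: "U l - L l = of_int s * of_int (N - 1) / of_int r" for l
    by (simp add: U_def L_def diff_divide_distrib[symmetric])
  have "fiber_lo r l = max 0 (L l)" "fiber_hi r s N l = min (of_int (N - 1)) (U l)" for l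
    by (simp_all add: fiber_lo_def fiber_hi_def L_def U_def)
  then have "min (fiber_hi r s N a - fiber_lo r a) (fiber_hi r s N c - fiber_lo r c)
          \<le> fiber_hi r s N b - fiber_lo r b"
    using mono width[of a] width[of b] by (simp add: min_def max_def split: if_splits) linarith?
  moreover define g where "g x = (if 0 \<le> x then x / of_int s + 1 else 0)" for x :: real
  have "mono g"
    using \<open>s > 0\<close> by (auto simp: mono_def g_def divide_right_mono)
  moreover have "fiber_estimate r s N l = g (fiber_hi r s N l - fiber_lo r l)" for l
    by (simp add: fiber_estimate_def g_def)
  ultimately show ?thesis
    by (simp add: min_of_mono monoD)
qed

lemma fiber_estimate_nonneg: "s > 0 \<Longrightarrow> 0 \<le> fiber_estimate r s N l"
  by (simp add: fiber_estimate_def)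

lemma fiber_estimate_le:
  assumes "s > 0" and "0 \<le> N"
  shows "fiber_estimate r s N l \<le> of_int N / of_int s + 1"
proof -
  have "fiber_hi r s N l - fiber_lo r l \<le> of_int N"
    by (simp add: fiber_lo_def fiber_hi_def)
  then show ?thesis
    using assms by (auto simp: fiber_estimate_def divide_right_mono)
qed

definition box_cong_count :: "int \<Rightarrow> int \<Rightarrow> int \<Rightarrow> int \<Rightarrow> int \<Rightarrow> nat" where
  "box_cong_count r s N p K =
     card {(v, w). v \<in> {0..N-1} \<and> w \<in> {0..N-1} \<and> (r * v - s * w) mod p = K mod p}"

lemma card_box_filter_eq_sum_line_fiber:
  assumes "0 \<le> r" and "0 \<le> s"
  shows "card {(v, w). v \<in> {0..N-1} \<and> w \<in> {0..N-1} \<and> P (r * v - s * w)}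
           = (\<Sum>l | l \<in> {- s * (N - 1)..r * (N - 1)} \<and> P l. card (line_fiber r s N l))"
proof -
  let ?L = "{l. l \<in> {- s * (N - 1)..r * (N - 1)} \<and> P l}"
  have range: "r * v - s * w \<in> {- s * (N - 1)..r * (N - 1)}" if "v \<in> {0..N-1}" "w \<in> {0..N-1}" for v w
  proof -
    have "0 \<le> r * v" "r * v \<le> r * (N - 1)" "0 \<le> s * w" "s * w \<le> s * (N - 1)"
      using that assms by (simp_all add: mult_left_mono)
    then show ?thesis by simp
  qed
  have "{(v, w). v \<in> {0..N-1} \<and> w \<in> {0..N-1} \<and> P (r * v - s * w)} = (\<Union>l\<in>?L. line_fiber r s N l)"
    using range by (auto simp: line_fiber_def)
  then have "card {(v, w). v \<in> {0..N-1} \<and> w \<in> {0..N-1} \<and> P (r * v - s * w)}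
               = card (\<Union>l\<in>?L. line_fiber r s N l)"
    by simp
  also have "\<dots> = (\<Sum>l\<in>?L. card (line_fiber r s N l))"
  proof (rule card_UN_disjoint)
    show "finite ?L"
      by (rule finite_subset[of _ "{- s * (N - 1)..r * (N - 1)}"]) auto
    show "\<forall>l\<in>?L. finite (line_fiber r s N l)"
      by (auto intro: finite_subset[of _ "{0..N-1} \<times> {0..N-1}"] simp: line_fiber_def)
  qed (auto simp: line_fiber_def)
  finally show ?thesis .
qed

lemma sum_fiber_estimate_le:
  assumes "r > 0" and "s > 0" and "coprime r s" and "N \<ge> 1"
  shows "(\<Sum>l\<in>{- s * (N - 1)..r * (N - 1)}. fiber_estimate r s N l)
           \<le> of_int N ^ 2 + 2 * (of_int r + of_int s) * of_int N"
proof -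
  let ?I = "{- s * (N - 1)..r * (N - 1)}"
  have "(\<Sum>l\<in>?I. fiber_estimate r s N l) \<le> (\<Sum>l\<in>?I. real (card (line_fiber r s N l)) + 2)"
    using assms by (intro sum_mono fiber_estimate_le_card)
  also have "\<dots> = of_int N ^ 2 + 2 * real (card ?I)"
  proof -
    have "{(v, w). v \<in> {0..N-1} \<and> w \<in> {0..N-1} \<and> True} = {0..N-1} \<times> {0..N-1}"
      by auto
    moreover have "card {(v, w). v \<in> {0..N-1} \<and> w \<in> {0..N-1} \<and> True} = (\<Sum>l\<in>?I. card (line_fiber r s N l))"
      using card_box_filter_eq_sum_line_fiber[of r s N "\<lambda>_. True"] assms
      by (simp only: simp_thms Collect_mem_eq less_imp_le)
    ultimately have "(\<Sum>l\<in>?I. card (line_fiber r s N l)) = nat N * nat N"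
      by simp
    then show ?thesis
      using assms by (simp add: sum.distrib power2_eq_square flip: of_nat_sum)
  qed
  also have "\<dots> \<le> of_int N ^ 2 + 2 * (of_int r + of_int s) * of_int N"
  proof -
    have "0 \<le> (r + s) * (N - 1)"
      using assms by simp
    then have "int (card ?I) = (r + s) * (N - 1) + 1"
      by (simp add: algebra_simps)
    also have "\<dots> \<le> (r + s) * N"
      using assms by (simp add: algebra_simps)
    finally have "of_int (int (card ?I)) \<le> (of_int ((r + s) * N) :: real)"
      by (simp only: of_int_le_iff)
    then have "real (card ?I) \<le> (of_int r + of_int s) * of_int N"
      by (simp only: of_int_of_nat_eq of_int_mult of_int_add)
    then show ?thesis
      by linarith
  qed
  finally show ?thesis .
qed

lemma box_cong_count_le_pos:
  assumes "r > 0" and "s > 0" and "coprime r s" and "p > 0" and "N \<ge> 1"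
  shows "real (box_cong_count r s N p K)
           \<le> (of_int N ^ 2 + 2 * (of_int r + of_int s) * of_int N) / of_int p + of_int N / of_int s + 1"
proof -
  let ?I = "{- s * (N - 1)..r * (N - 1)}"
  let ?est = "fiber_estimate r s N"
  have "real (box_cong_count r s N p K)
          = (\<Sum>l | l \<in> ?I \<and> l mod p = K mod p. real (card (line_fiber r s N l)))"
    using card_box_filter_eq_sum_line_fiber[of r s N "\<lambda>l. l mod p = K mod p"] assms
    by (simp add: box_cong_count_def)
  also have "\<dots> \<le> (\<Sum>l | l \<in> ?I \<and> l mod p = K mod p. ?est l)"
    using assms by (intro sum_mono card_line_fiber_le_estimate)
  finally have "of_int p * real (box_cong_count r s N p K)
                  \<le> of_int p * (\<Sum>l | l \<in> ?I \<and> l mod p = K mod p. ?est l)"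
    using \<open>p > 0\<close> by simp
  also have "\<dots> \<le> (\<Sum>l\<in>?I. ?est l) + of_int p * (of_int N / of_int s + 1)"
    using assms by (intro sum_progression_le fiber_estimate_nonneg fiber_estimate_quasiconcave fiber_estimate_le) auto
  also have "\<dots> \<le> of_int N ^ 2 + 2 * (of_int r + of_int s) * of_int N + of_int p * (of_int N / of_int s + 1)"
    using sum_fiber_estimate_le[OF assms(1-3,5)] by simp
  finally show ?thesis
    using \<open>p > 0\<close> by (simp add: field_simps)
qed

lemma box_cong_count_abs:
  "\<exists>K'. box_cong_count r s N p K \<le> box_cong_count \<bar>r\<bar> \<bar>s\<bar> N p K'"
proof -
  define fv where "fv v = (if r < 0 then N - 1 - v else v)" for v :: int
  define fw where "fw w = (if s < 0 then N - 1 - w else w)" for w :: int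
  define c where "c = (if s < 0 then s * (N - 1) else 0) - (if r < 0 then r * (N - 1) else 0)"
  let ?A = "{(v, w). v \<in> {0..N-1} \<and> w \<in> {0..N-1} \<and> (r * v - s * w) mod p = K mod p}"
  let ?B = "{(v, w). v \<in> {0..N-1} \<and> w \<in> {0..N-1} \<and> (\<bar>r\<bar> * v - \<bar>s\<bar> * w) mod p = (K + c) mod p}"
  have shift: "\<bar>r\<bar> * fv v - \<bar>s\<bar> * fw w = (r * v - s * w) + c" for v w
    by (auto simp: fv_def fw_def c_def algebra_simps abs_if)
  have "inj_on (map_prod fv fw) ?A"
    by (rule inj_onI) (auto simp: fv_def fw_def split: if_splits)
  moreover have "map_prod fv fw ` ?A \<subseteq> ?B"
  proof clarify
    fix v w assume "v \<in> {0..N-1}" "w \<in> {0..N-1}" "(r * v - s * w) mod p = K mod p"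
    then show "fv v \<in> {0..N-1} \<and> fw w \<in> {0..N-1} \<and> (\<bar>r\<bar> * fv v - \<bar>s\<bar> * fw w) mod p = (K + c) mod p"
      unfolding shift by (auto simp: fv_def fw_def intro: mod_add_cong)
  qed
  moreover have "finite ?B"
    by (rule finite_subset[of _ "{0..N-1} \<times> {0..N-1}"]) auto
  ultimately have "card ?A \<le> card ?B"
    by (rule card_inj_on_le)
  then show ?thesis
    unfolding box_cong_count_def by blast
qed

lemma box_cong_count_swap: "box_cong_count r s N p K \<le> box_cong_count s r N p (- K)"
proof -
  let ?A = "{(v, w). v \<in> {0..N-1} \<and> w \<in> {0..N-1} \<and> (r * v - s * w) mod p = K mod p}"
  let ?B = "{(v, w). v \<in> {0..N-1} \<and> w \<in> {0..N-1} \<and> (s * v - r * w) mod p = (- K) mod p}"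
  have "prod.swap ` ?A \<subseteq> ?B"
  proof
    fix x assume "x \<in> prod.swap ` ?A"
    then obtain v w where "x = (w, v)" "v \<in> {0..N-1}" "w \<in> {0..N-1}"
      and cong: "(r * v - s * w) mod p = K mod p"
      by auto
    moreover have "(s * w - r * v) mod p = (- K) mod p"
      using mod_minus_cong[OF cong] by simp
    ultimately show "x \<in> ?B"
      by simp
  qed
  moreover have "finite ?B"
    by (rule finite_subset[of _ "{0..N-1} \<times> {0..N-1}"]) auto
  ultimately have "card ?A \<le> card ?B"
    by (intro card_inj_on_le[of prod.swap]) auto
  then show ?thesis
    unfolding box_cong_count_def .
qed

lemma box_cong_count_le:
  assumes "r \<noteq> 0" and "s \<noteq> 0" and "coprime r s" and "p > 0" and "N \<ge> 1"
  shows "real (box_cong_count r s N p K)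
           \<le> (of_int N ^ 2 + 2 * (of_int \<bar>r\<bar> + of_int \<bar>s\<bar>) * of_int N) / of_int p
              + of_int N / of_int (max \<bar>r\<bar> \<bar>s\<bar>) + 1"
proof -
  obtain K' where K': "box_cong_count r s N p K \<le> box_cong_count \<bar>r\<bar> \<bar>s\<bar> N p K'"
    using box_cong_count_abs by blast
  have pos: "\<bar>r\<bar> > 0" "\<bar>s\<bar> > 0" and cop: "coprime \<bar>r\<bar> \<bar>s\<bar>" "coprime \<bar>s\<bar> \<bar>r\<bar>"
    using assms by (simp_all add: coprime_commute)
  show ?thesis
  proof (cases "\<bar>r\<bar> \<le> \<bar>s\<bar>")
    case True
    then show ?thesis
      using K' box_cong_count_le_pos[OF pos cop(1) \<open>p > 0\<close> \<open>N \<ge> 1\<close>, of K']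
      by (simp add: max_absorb2)
  next
    case False
    then show ?thesis
      using K' box_cong_count_swap[of "\<bar>r\<bar>" "\<bar>s\<bar>" N p K']
        box_cong_count_le_pos[OF pos(2,1) cop(2) \<open>p > 0\<close> \<open>N \<ge> 1\<close>, of "- K'"]
      by (simp add: max_absorb1 add.commute)
  qed
qed

definition gcd_ratio :: "nat \<Rightarrow> nat \<Rightarrow> real" where
  "gcd_ratio a b = real (gcd a b) / real (max a b)"

lemma sum_inverse_max_le: "(\<Sum>a=1..n. \<Sum>b=1..n. 1 / real (max a b)) \<le> 2 * real n"
proof (induction n)
  case (Suc n)
  have row: "(\<Sum>b=1..Suc n. 1 / real (max a b)) = (\<Sum>b=1..n. 1 / real (max a b)) + 1 / real (Suc n)"
    if "a \<in> {1..n}" for a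
    using that by (simp add: max_def)
  have last: "(\<Sum>b=1..Suc n. 1 / real (max (Suc n) b)) = 1"
  proof -
    have "(\<Sum>b=1..Suc n. 1 / real (max (Suc n) b)) = (\<Sum>b=1..Suc n. 1 / real (Suc n))"
      by (rule sum.cong) (auto simp: max_def)
    then show ?thesis
      by simp
  qed
  have "(\<Sum>a=1..Suc n. \<Sum>b=1..Suc n. 1 / real (max a b))
          = (\<Sum>a=1..n. \<Sum>b=1..Suc n. 1 / real (max a b)) + (\<Sum>b=1..Suc n. 1 / real (max (Suc n) b))"
    by (simp only: sum.cl_ivl_Suc) simp
  also have "\<dots> = (\<Sum>a=1..n. \<Sum>b=1..n. 1 / real (max a b)) + real n / real (Suc n) + 1"
    by (simp add: row sum.distrib last)
  also have "\<dots> \<le> 2 * real (Suc n)"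
  proof -
    have "real n / real (Suc n) \<le> 1"
      by simp
    with Suc.IH have "(\<Sum>a=1..n. \<Sum>b=1..n. 1 / real (max a b)) + real n / real (Suc n) + 1
                        \<le> 2 * real n + 1 + 1"
      by (intro add_mono) auto
    then show ?thesis
      by simp
  qed
  finally show ?case .
qed simp

lemma multiples_atLeastAtMost:
  "g > 0 \<Longrightarrow> {a \<in> {1..n}. g dvd a} = (\<lambda>t. g * t) ` {1..n div (g::nat)}"
proof safe
  fix a assume "g > 0" "a \<in> {1..n}" "g dvd a"
  then obtain t where t: "a = g * t"
    by blast
  then have "t \<ge> 1"
    using \<open>a \<in> {1..n}\<close> by (cases t) auto
  moreover have "t \<le> n div g"
    using \<open>a \<in> {1..n}\<close> t \<open>g > 0\<close>
    by (metis atLeastAtMost_iff div_le_mono nonzero_mult_div_cancel_left not_gr0)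
  ultimately show "a \<in> (\<lambda>t. g * t) ` {1..n div g}"
    using t by auto
qed (auto simp: less_eq_div_iff_mult_less_eq mult.commute)

lemma sum_common_multiples_le:
  fixes g n :: nat
  assumes "g > 0"
  defines "M \<equiv> {a \<in> {1..n}. g dvd a}"
  shows "(\<Sum>a\<in>M. \<Sum>b\<in>M. real g / real (max a b)) \<le> 2 * (real n / real g)"
proof -
  have "(\<Sum>a\<in>M. \<Sum>b\<in>M. real g / real (max a b))
          = (\<Sum>a=1..n div g. \<Sum>b=1..n div g. real g / real (max (g * a) (g * b)))"
    unfolding M_def multiples_atLeastAtMost[OF \<open>g > 0\<close>] using \<open>g > 0\<close> by (simp add: sum.reindex inj_on_def)
  also have "\<dots> = (\<Sum>a=1..n div g. \<Sum>b=1..n div g. 1 / real (max a b))"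
  proof (intro sum.cong refl)
    fix a b
    have "max (g * a) (g * b) = g * max a b"
      by (simp add: max_def)
    then show "real g / real (max (g * a) (g * b)) = 1 / real (max a b)"
      using \<open>g > 0\<close> by simp
  qed
  also have "\<dots> \<le> 2 * real (n div g)"
    by (rule sum_inverse_max_le)
  also have "\<dots> \<le> 2 * (real n / real g)"
    using of_nat_div_le_of_nat[where 'a = real, of n g] by linarith
  finally show ?thesis .
qed

text \<open>Split gcd a b / max a b over the common divisors of a and b.\<close>

lemma sum_gcd_ratio_le: "(\<Sum>a=1..n. \<Sum>b=1..n. gcd_ratio a b) \<le> 2 * real n * harm n"
proof -
  define h where "h g a b = (if g dvd a \<and> g dvd b then real g / real (max a b) else 0)" for g a b :: nat
  have "gcd_ratio a b \<le> (\<Sum>g=1..n. h g a b)" if "a \<in> {1..n}" "b \<in> {1..n}" for a b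
  proof -
    have "gcd a b \<le> a"
      using that by (simp add: gcd_le1_nat)
    then have "gcd a b \<le> n"
      using that by (meson atLeastAtMost_iff le_trans)
    then have "gcd a b \<in> {1..n}"
      using that by (simp add: Suc_le_eq)
    then have "h (gcd a b) a b \<le> (\<Sum>g=1..n. h g a b)"
      by (intro member_le_sum) (auto simp: h_def)
    then show ?thesis
      by (simp add: h_def gcd_ratio_def)
  qed
  then have "(\<Sum>a=1..n. \<Sum>b=1..n. gcd_ratio a b) \<le> (\<Sum>a=1..n. \<Sum>b=1..n. \<Sum>g=1..n. h g a b)"
    by (intro sum_mono) auto
  also have "\<dots> = (\<Sum>a=1..n. \<Sum>g=1..n. \<Sum>b=1..n. h g a b)"
    by (rule sum.cong[OF refl]) (rule sum.swap)
  also have "\<dots> = (\<Sum>g=1..n. \<Sum>a=1..n. \<Sum>b=1..n. h g a b)"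
    by (rule sum.swap)
  also have "\<dots> \<le> (\<Sum>g=1..n. 2 * (real n / real g))"
  proof (rule sum_mono)
    fix g assume "g \<in> {1..n}"
    let ?M = "{a \<in> {1..n}. g dvd a}"
    have "(\<Sum>a=1..n. \<Sum>b=1..n. h g a b)
            = (\<Sum>a=1..n. if g dvd a then (\<Sum>b\<in>?M. real g / real (max a b)) else 0)"
      by (rule sum.cong[OF refl], subst sum.inter_filter) (auto simp: h_def)
    also have "\<dots> = (\<Sum>a\<in>?M. \<Sum>b\<in>?M. real g / real (max a b))"
      by (subst sum.inter_filter) auto
    also have "\<dots> \<le> 2 * (real n / real g)"
      using \<open>g \<in> {1..n}\<close> by (intro sum_common_multiples_le) simp
    finally show "(\<Sum>a=1..n. \<Sum>b=1..n. h g a b) \<le> 2 * (real n / real g)" .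
  qed
  also have "\<dots> = 2 * real n * harm n"
    by (simp add: harm_def sum_distrib_left divide_inverse mult.assoc)
  finally show ?thesis .
qed

lemma harm_le_one_plus_ln: "n > 0 \<Longrightarrow> harm n \<le> 1 + ln (real n)"
  using euler_mascheroni_sequence_decreasing[of 1 n] by (simp add: harm_def)

lemma gcd_ratio_nonneg: "0 \<le> gcd_ratio a b"
  by (simp add: gcd_ratio_def)

lemma sum_dist_le:
  fixes \<phi> :: "nat \<Rightarrow> real"
  assumes nonneg: "\<And>a. 0 \<le> \<phi> a" and "Y \<subseteq> {..<U}" and "x \<notin> Y" and "x < U"
  shows "(\<Sum>y\<in>Y. \<phi> (nat \<bar>int y - int x\<bar>)) \<le> 2 * (\<Sum>a=1..U-1. \<phi> a)"
proof -
  have reindex: "(\<Sum>y\<in>Y'. \<phi> (d y)) \<le> (\<Sum>a=1..U-1. \<phi> a)"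
    if "inj_on d Y'" "d ` Y' \<subseteq> {1..U-1}" for Y' d
  proof -
    have "(\<Sum>y\<in>Y'. \<phi> (d y)) = (\<Sum>a\<in>d ` Y'. \<phi> a)"
      using that by (simp add: sum.reindex)
    also have "\<dots> \<le> (\<Sum>a=1..U-1. \<phi> a)"
      using that nonneg by (intro sum_mono2) auto
    finally show ?thesis .
  qed
  let ?below = "{y \<in> Y. y < x}" and ?above = "{y \<in> Y. x < y}"
  have "finite Y"
    using \<open>Y \<subseteq> {..<U}\<close> finite_subset by blast
  have "?below \<union> ?above = Y"
    using \<open>x \<notin> Y\<close> less_linear by blast
  moreover have "(\<Sum>y\<in>?below \<union> ?above. \<phi> (nat \<bar>int y - int x\<bar>))
      = (\<Sum>y\<in>?below. \<phi> (nat \<bar>int y - int x\<bar>)) + (\<Sum>y\<in>?above. \<phi> (nat \<bar>int y - int x\<bar>))"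
    using \<open>finite Y\<close> by (intro sum.union_disjoint) auto
  moreover have "(\<Sum>y\<in>?below. \<phi> (nat \<bar>int y - int x\<bar>)) = (\<Sum>y\<in>?below. \<phi> (x - y))"
    by (rule sum.cong) (auto simp: nat_diff_distrib)
  moreover have "(\<Sum>y\<in>?above. \<phi> (nat \<bar>int y - int x\<bar>)) = (\<Sum>y\<in>?above. \<phi> (y - x))"
    by (rule sum.cong) (auto simp: nat_diff_distrib)
  ultimately have "(\<Sum>y\<in>Y. \<phi> (nat \<bar>int y - int x\<bar>))
                     = (\<Sum>y\<in>?below. \<phi> (x - y)) + (\<Sum>y\<in>?above. \<phi> (y - x))"
    by simp
  also have "\<dots> \<le> (\<Sum>a=1..U-1. \<phi> a) + (\<Sum>a=1..U-1. \<phi> a)"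
    using \<open>Y \<subseteq> {..<U}\<close> \<open>x < U\<close> by (intro add_mono reindex) (auto simp: inj_on_def dest!: subsetD)
  finally show ?thesis
    by simp
qed

lemma sum_gcd_ratio_dist_le:
  assumes "Y \<subseteq> {..<U}" and "x \<notin> Y" and "x < U"
  shows "(\<Sum>y\<in>Y. \<Sum>z\<in>Y. gcd_ratio (nat \<bar>int y - int x\<bar>) (nat \<bar>int z - int x\<bar>))
           \<le> 8 * real U * (1 + ln (real U))"
proof -
  have "(\<Sum>y\<in>Y. \<Sum>z\<in>Y. gcd_ratio (nat \<bar>int y - int x\<bar>) (nat \<bar>int z - int x\<bar>))
          \<le> (\<Sum>y\<in>Y. 2 * (\<Sum>b=1..U-1. gcd_ratio (nat \<bar>int y - int x\<bar>) b))"
    using assms by (intro sum_mono sum_dist_le gcd_ratio_nonneg)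
  also have "\<dots> = 2 * (\<Sum>y\<in>Y. \<Sum>b=1..U-1. gcd_ratio (nat \<bar>int y - int x\<bar>) b)"
    by (simp add: sum_distrib_left)
  also have "\<dots> \<le> 2 * (2 * (\<Sum>a=1..U-1. \<Sum>b=1..U-1. gcd_ratio a b))"
    using assms by (intro mult_left_mono sum_dist_le sum_nonneg gcd_ratio_nonneg) auto
  also have "\<dots> \<le> 2 * (2 * (2 * real (U - 1) * harm (U - 1)))"
    using sum_gcd_ratio_le[of "U - 1"] by linarith
  also have "\<dots> \<le> 8 * real U * (1 + ln (real U))"
  proof (cases "U \<ge> 2")
    case True
    have "harm (U - 1) \<le> 1 + ln (real (U - 1))"
      using True by (intro harm_le_one_plus_ln) simp
    also have "\<dots> \<le> 1 + ln (real U)"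
      using True by simp
    finally have "real (U - 1) * harm (U - 1) \<le> real U * (1 + ln (real U))"
      by (intro mult_mono) (auto intro: harm_nonneg)
    then show ?thesis
      by simp
  next
    case False
    then have "U = 0 \<or> U = 1"
      by linarith
    then show ?thesis
      by auto
  qed
  finally show ?thesis .
qed

definition bucket :: "nat \<Rightarrow> nat \<Rightarrow> nat \<Rightarrow> nat set" where
  "bucket p m a = {u. u < p \<and> u mod m = a}"

definition collision_seeds :: "nat \<Rightarrow> nat \<Rightarrow> nat \<Rightarrow> nat \<Rightarrow> nat \<Rightarrow> nat \<Rightarrow> nat \<Rightarrow> (nat \<times> nat) set" where
  "collision_seeds p m x a b y z =
     {(\<sigma>, \<tau>). \<sigma> < p \<and> \<tau> < p \<and> hsh p m \<sigma> \<tau> x = a \<and> hsh p m \<sigma> \<tau> y = b \<and> hsh p m \<sigma> \<tau> z = b}"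

lemma card_collision_quadruples:
  assumes "finite X"
  shows "card {(\<sigma>, \<tau>, y, z). \<sigma> \<in> {..<p} \<and> \<tau> \<in> {..<p} \<and> y \<in> X \<and> z \<in> X \<and>
                  hsh p m \<sigma> \<tau> x = a \<and> hsh p m \<sigma> \<tau> y = b \<and> hsh p m \<sigma> \<tau> z = b}
           = (\<Sum>y\<in>X. \<Sum>z\<in>X. card (collision_seeds p m x a b y z))"
proof -
  let ?S = "{(\<sigma>, \<tau>, y, z). \<sigma> \<in> {..<p} \<and> \<tau> \<in> {..<p} \<and> y \<in> X \<and> z \<in> X \<and>
                  hsh p m \<sigma> \<tau> x = a \<and> hsh p m \<sigma> \<tau> y = b \<and> hsh p m \<sigma> \<tau> z = b}"
  define A where "A yz = (\<lambda>(\<sigma>, \<tau>). (\<sigma>, \<tau>, yz)) ` collision_seeds p m x a b (fst yz) (snd yz)" for yz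
  have "?S = (\<Union>yz\<in>X \<times> X. A yz)"
  proof (intro equalityI subsetI)
    fix q assume "q \<in> ?S"
    then obtain \<sigma> \<tau> y z where "q = (\<sigma>, \<tau>, y, z)" "y \<in> X" "z \<in> X"
      and "(\<sigma>, \<tau>) \<in> collision_seeds p m x a b y z"
      by (auto simp: collision_seeds_def)
    then show "q \<in> (\<Union>yz\<in>X \<times> X. A yz)"
      unfolding A_def by (intro UN_I[of "(y, z)"] image_eqI[of _ _ "(\<sigma>, \<tau>)"]) auto
  qed (auto simp: A_def collision_seeds_def)
  also have "card \<dots> = (\<Sum>yz\<in>X \<times> X. card (A yz))"
  proof (rule card_UN_disjoint)
    have "finite (collision_seeds p m x a b y z)" for y z
      by (rule finite_subset[of _ "{..<p} \<times> {..<p}"]) (auto simp: collision_seeds_def)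
    then show "\<forall>yz\<in>X \<times> X. finite (A yz)"
      by (simp add: A_def)
  qed (auto simp: A_def \<open>finite X\<close>)
  also have "\<dots> = (\<Sum>(y, z)\<in>X \<times> X. card (collision_seeds p m x a b y z))"
    by (intro sum.cong refl) (auto simp: A_def inj_on_def intro!: card_image)
  finally show ?thesis
    by (simp add: sum.cartesian_product)
qed

lemma add_shift_mod_eq:
  fixes c u p :: nat
  assumes "p > 0" and "u < p"
  shows "(c + (u + p - c mod p) mod p) mod p = u"
proof -
  have "(c + (u + p - c mod p) mod p) mod p = (c mod p + (u + p - c mod p)) mod p"
    by (simp add: mod_add_right_eq mod_add_left_eq)
  also have "c mod p + (u + p - c mod p) = u + p"
    using mod_less_divisor[OF \<open>p > 0\<close>, of c] by linarith
  finally show ?thesis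
    using \<open>u < p\<close> by simp
qed

lemma card_hash_quadruples_ge:
  assumes "p > 0" and "finite X"
  shows "p * card (bucket p m a) * card X ^ 2 \<le>
    card {(\<sigma>, \<tau>, y, z). \<sigma> \<in> {..<p} \<and> \<tau> \<in> {..<p} \<and> y \<in> X \<and> z \<in> X \<and> hsh p m \<sigma> \<tau> x = a}"
proof -
  define shift where "shift \<sigma> u = (u + p - (\<sigma> * x) mod p) mod p" for \<sigma> u
  have shift: "(\<sigma> * x + shift \<sigma> u) mod p = u" if "u < p" for \<sigma> u
    using add_shift_mod_eq[OF \<open>p > 0\<close> that] by (simp add: shift_def)
  let ?D = "{(\<sigma>, \<tau>, y, z). \<sigma> \<in> {..<p} \<and> \<tau> \<in> {..<p} \<and> y \<in> X \<and> z \<in> X \<and> hsh p m \<sigma> \<tau> x = a}"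
  let ?F = "\<lambda>((\<sigma>, u), yz). (\<sigma>, shift \<sigma> u, yz)"
  have "inj_on ?F (({..<p} \<times> bucket p m a) \<times> X \<times> X)"
  proof (rule inj_onI)
    fix q q' assume "q \<in> ({..<p} \<times> bucket p m a) \<times> X \<times> X" "q' \<in> ({..<p} \<times> bucket p m a) \<times> X \<times> X"
      and "?F q = ?F q'"
    moreover obtain \<sigma> u yz \<sigma>' u' yz' where "q = ((\<sigma>, u), yz)" "q' = ((\<sigma>', u'), yz')"
      by (metis prod.collapse)
    ultimately have "\<sigma> = \<sigma>'" "yz = yz'" "shift \<sigma> u = shift \<sigma> u'" "u < p" "u' < p"
      by (auto simp: bucket_def)
    then have "u = u'"
      using shift by metis
    then show "q = q'"
      using \<open>q = _\<close> \<open>q' = _\<close> \<open>\<sigma> = \<sigma>'\<close> \<open>yz = yz'\<close> by simp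
  qed
  moreover have "?F ` (({..<p} \<times> bucket p m a) \<times> X \<times> X) \<subseteq> ?D"
  proof
    fix q assume "q \<in> ?F ` (({..<p} \<times> bucket p m a) \<times> X \<times> X)"
    then obtain \<sigma> u y z where "\<sigma> < p" "u \<in> bucket p m a" "y \<in> X" "z \<in> X" "q = (\<sigma>, shift \<sigma> u, y, z)"
      by auto
    moreover have "shift \<sigma> u < p"
      using \<open>p > 0\<close> by (simp add: shift_def)
    moreover have "hsh p m \<sigma> (shift \<sigma> u) x = a"
      using shift[of u \<sigma>] \<open>u \<in> bucket p m a\<close> by (simp add: hsh_def bucket_def)
    ultimately show "q \<in> ?D"
      by simp
  qed
  moreover have "finite ?D"
    by (rule finite_subset[of _ "{..<p} \<times> {..<p} \<times> X \<times> X"]) (use \<open>finite X\<close> in auto)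
  ultimately have "card (({..<p} \<times> bucket p m a) \<times> X \<times> X) \<le> card ?D"
    by (rule card_inj_on_le)
  then show ?thesis
    by (simp add: card_cartesian_product power2_eq_square)
qed

lemma int_dvd_diff_iff_mod_eq:
  fixes a b p :: nat
  shows "int p dvd int a - int b \<longleftrightarrow> a mod p = b mod p"
  by (metis mod_eq_dvd_iff of_nat_eq_iff of_nat_mod)

lemma inj_on_affine_mod_prime:
  fixes p x y :: nat
  assumes "prime p" and "x \<noteq> y" and "x < p" and "y < p"
  shows "inj_on (\<lambda>(\<sigma>, \<tau>). ((\<sigma> * x + \<tau>) mod p, (\<sigma> * y + \<tau>) mod p)) ({..<p} \<times> {..<p})"
proof (rule inj_onI, clarsimp)
  fix \<sigma> \<tau> \<sigma>' \<tau>' assume "\<sigma> < p" "\<tau> < p" "\<sigma>' < p" "\<tau>' < p"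
    and "(\<sigma> * x + \<tau>) mod p = (\<sigma>' * x + \<tau>') mod p" "(\<sigma> * y + \<tau>) mod p = (\<sigma>' * y + \<tau>') mod p"
  then have dx: "int p dvd (int \<sigma> * int x + int \<tau>) - (int \<sigma>' * int x + int \<tau>')"
    and dy: "int p dvd (int \<sigma> * int y + int \<tau>) - (int \<sigma>' * int y + int \<tau>')"
    by (simp_all flip: int_dvd_diff_iff_mod_eq)
  have "(int \<sigma> * int x + int \<tau> - (int \<sigma>' * int x + int \<tau>')) - (int \<sigma> * int y + int \<tau> - (int \<sigma>' * int y + int \<tau>'))
          = (int \<sigma> - int \<sigma>') * (int x - int y)"
    by (simp add: algebra_simps)
  then have "int p dvd (int \<sigma> - int \<sigma>') * (int x - int y)"
    using dvd_diff[OF dx dy] by simp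
  moreover have "\<not> int p dvd int x - int y"
    using \<open>x \<noteq> y\<close> \<open>x < p\<close> \<open>y < p\<close> by (simp add: int_dvd_diff_iff_mod_eq)
  ultimately have "int p dvd int \<sigma> - int \<sigma>'"
    using \<open>prime p\<close> by (simp add: prime_dvd_mult_iff)
  then have "\<sigma> = \<sigma>'"
    using \<open>\<sigma> < p\<close> \<open>\<sigma>' < p\<close> by (simp add: int_dvd_diff_iff_mod_eq)
  moreover from this have "int p dvd int \<tau> - int \<tau>'"
    using dx by simp
  then have "\<tau> = \<tau>'"
    using \<open>\<tau> < p\<close> \<open>\<tau>' < p\<close> by (simp add: int_dvd_diff_iff_mod_eq)
  ultimately show "\<sigma> = \<sigma>' \<and> \<tau> = \<tau>'"
    by simp
qed

lemma inj_on_hash_quotients: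
  assumes "prime p" and "x \<noteq> y" and "x < p" and "y < p"
  shows "inj_on (\<lambda>(\<sigma>, \<tau>). ((\<sigma> * x + \<tau>) mod p, ((\<sigma> * y + \<tau>) mod p) div m))
           {(\<sigma>, \<tau>). \<sigma> < p \<and> \<tau> < p \<and> hsh p m \<sigma> \<tau> y = b}"
    (is "inj_on ?F ?S")
proof (rule inj_on_imageI2)
  have "inj_on (\<lambda>(\<sigma>, \<tau>). ((\<sigma> * x + \<tau>) mod p, (\<sigma> * y + \<tau>) mod p)) ?S"
    using inj_on_affine_mod_prime[OF assms] by (rule inj_on_subset) auto
  moreover have "(\<lambda>(\<sigma>, \<tau>). ((\<sigma> * x + \<tau>) mod p, (\<sigma> * y + \<tau>) mod p)) q = (map_prod id (\<lambda>v. v * m + b) \<circ> ?F) q"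
    if "q \<in> ?S" for q
    using that div_mult_mod_eq by (auto simp: hsh_def)
  ultimately show "inj_on (map_prod id (\<lambda>v. v * m + b) \<circ> ?F) ?S"
    by (rule inj_on_cong[THEN iffD1, rotated])
qed

lemma prime_dvd_cross_combination:
  fixes P d1 d2 A B \<sigma> :: int
  assumes "prime P" and "\<not> P dvd gcd d1 d2" and "P dvd A - \<sigma> * d1" and "P dvd B - \<sigma> * d2"
  shows "P dvd (d2 div gcd d1 d2) * A - (d1 div gcd d1 d2) * B"
proof -
  let ?g = "gcd d1 d2"
  have "?g * ((d2 div ?g) * A - (d1 div ?g) * B) = d2 * A - d1 * B"
    by (simp add: algebra_simps)
  also have "\<dots> = d2 * (A - \<sigma> * d1) - d1 * (B - \<sigma> * d2)"
    by (simp add: algebra_simps)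
  finally have "P dvd ?g * ((d2 div ?g) * A - (d1 div ?g) * B)"
    using assms(3,4) by (simp add: dvd_diff)
  then show ?thesis
    using prime_dvd_multD[OF assms(1)] assms(2) by blast
qed

lemma cong_of_hash_values:
  fixes p x y z \<sigma> \<tau> u b m v w minv r s :: int
  assumes "prime p" and "\<not> p dvd gcd (y - x) (z - x)" and "p dvd minv * m - 1"
    and "r = (z - x) div gcd (y - x) (z - x)" and "s = (y - x) div gcd (y - x) (z - x)"
    and "p dvd u - (\<sigma> * x + \<tau>)" and "p dvd (b + m * v) - (\<sigma> * y + \<tau>)" and "p dvd (b + m * w) - (\<sigma> * z + \<tau>)"
  shows "(r * v - s * w) mod p = (minv * (r - s) * (u - b)) mod p"
proof -
  have "p dvd ((b + m * v) - (\<sigma> * y + \<tau>)) - (u - (\<sigma> * x + \<tau>))"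
    using assms(7,6) by (rule dvd_diff)
  moreover have "p dvd ((b + m * w) - (\<sigma> * z + \<tau>)) - (u - (\<sigma> * x + \<tau>))"
    using assms(8,6) by (rule dvd_diff)
  ultimately have "p dvd (b + m * v - u) - \<sigma> * (y - x)" "p dvd (b + m * w - u) - \<sigma> * (z - x)"
    by (simp_all add: algebra_simps)
  then have "p dvd r * (b + m * v - u) - s * (b + m * w - u)"
    unfolding assms(4,5) by (rule prime_dvd_cross_combination[OF assms(1,2)])
  then have "p dvd minv * (r * (b + m * v - u) - s * (b + m * w - u)) - (minv * m - 1) * (r * v - s * w)"
    using assms(3) by (simp add: dvd_diff)
  also have "minv * (r * (b + m * v - u) - s * (b + m * w - u)) - (minv * m - 1) * (r * v - s * w)
               = (r * v - s * w) - minv * (r - s) * (u - b)"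
    by (simp add: algebra_simps)
  finally show ?thesis
    by (simp add: mod_eq_dvd_iff)
qed

lemma not_dvd_gcd_diff:
  fixes p x y :: nat and d :: int
  assumes "x \<noteq> y" and "x < p" and "y < p"
  shows "\<not> int p dvd gcd (int y - int x) d"
proof
  assume "int p dvd gcd (int y - int x) d"
  moreover have "0 < gcd (int y - int x) d" "gcd (int y - int x) d \<le> \<bar>int y - int x\<bar>"
    using \<open>x \<noteq> y\<close> dvd_imp_le_int[of "int y - int x" "gcd (int y - int x) d"] by simp_all
  ultimately show False
    using zdvd_imp_le[of "int p" "gcd (int y - int x) d"] \<open>x < p\<close> \<open>y < p\<close> by linarith
qed

lemma ex_inverse_mod_prime:
  fixes p m :: nat
  assumes "prime p" and "0 < m" and "m < p"
  obtains minv where "int p dvd minv * int m - 1"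
proof -
  have "coprime (int p) (int m)"
    using assms by (intro prime_imp_coprime) (auto dest: zdvd_imp_le)
  then obtain u v where "u * int m + v * int p = 1"
    using bezout_int[of "int m" "int p"] by (auto simp: coprime_iff_gcd_eq_1 gcd.commute)
  then have "int p dvd u * int m - 1"
    by (metis add_diff_cancel_left' dvd_triv_right add.commute minus_diff_eq dvd_minus_iff)
  then show ?thesis
    using that by blast
qed

lemma collision_seed_quotients_cong:
  fixes p m x y z a b \<sigma> \<tau> :: nat and minv :: int
  assumes "prime p" and "x \<noteq> y" and "x < p" and "y < p" and "int p dvd minv * int m - 1"
    and "(\<sigma>, \<tau>) \<in> collision_seeds p m x a b y z"
  defines "r \<equiv> (int z - int x) div gcd (int y - int x) (int z - int x)"
    and "s \<equiv> (int y - int x) div gcd (int y - int x) (int z - int x)"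
    and "u \<equiv> (\<sigma> * x + \<tau>) mod p" and "V \<equiv> (\<sigma> * y + \<tau>) mod p" and "W \<equiv> (\<sigma> * z + \<tau>) mod p"
  shows "(r * int (V div m) - s * int (W div m)) mod int p = minv * (r - s) * (int u - int b) mod int p"
proof (rule cong_of_hash_values[where \<sigma> = "int \<sigma>" and \<tau> = "int \<tau>"])
  show "prime (int p)" "\<not> int p dvd gcd (int y - int x) (int z - int x)"
    using assms(1-4) not_dvd_gcd_diff by simp_all
  have "V mod m = b" "W mod m = b"
    using \<open>(\<sigma>, \<tau>) \<in> collision_seeds p m x a b y z\<close> by (auto simp: collision_seeds_def hsh_def V_def W_def)
  then have "int b + int m * int (V div m) = int V" "int b + int m * int (W div m) = int W"
    using div_mult_mod_eq[of V m] div_mult_mod_eq[of W m]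
    by (simp_all flip: of_nat_mult of_nat_add) (simp_all add: algebra_simps)
  then show "int p dvd int u - (int \<sigma> * int x + int \<tau>)"
    "int p dvd int b + int m * int (V div m) - (int \<sigma> * int y + int \<tau>)"
    "int p dvd int b + int m * int (W div m) - (int \<sigma> * int z + int \<tau>)"
    by (simp_all add: u_def V_def W_def int_dvd_diff_iff_mod_eq flip: of_nat_mult of_nat_add)
qed (use assms(5) in \<open>simp_all add: r_def s_def\<close>)

text \<open>A collision seed is determined by the value u of its affine map at x together with the
  quotients by m of its values at y and z; these quotients lie in [0, N - 1] and satisfy a linear
  congruence depending only on u.\<close>

lemma card_collision_seeds_le_sum_box_cong_count:
  fixes p m x y z a b :: nat
  assumes "prime p" and "0 < m" and "m < p" and "x \<noteq> y" and "x < p" and "y < p"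
  defines "g \<equiv> gcd (int y - int x) (int z - int x)"
  shows "\<exists>K. card (collision_seeds p m x a b y z) \<le>
           (\<Sum>u\<in>bucket p m a. box_cong_count ((int z - int x) div g) ((int y - int x) div g)
                                  (int (p div m + 1)) (int p) (K u))"
proof -
  define r where "r = (int z - int x) div g"
  define s where "s = (int y - int x) div g"
  define N where "N = int (p div m + 1)"
  obtain minv where minv: "int p dvd minv * int m - 1"
    using ex_inverse_mod_prime[OF \<open>prime p\<close> \<open>0 < m\<close> \<open>m < p\<close>] .
  define K where "K u = minv * (r - s) * (int u - int b)" for u :: nat
  define Box where "Box u = {(v, w). v \<in> {0..N-1} \<and> w \<in> {0..N-1} \<and> (r * v - s * w) mod int p = K u mod int p}"
    for u
  let ?seeds = "collision_seeds p m x a b y z"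
  let ?F = "\<lambda>(\<sigma>, \<tau>). ((\<sigma> * x + \<tau>) mod p, int (((\<sigma> * y + \<tau>) mod p) div m), int (((\<sigma> * z + \<tau>) mod p) div m))"
  have "inj_on ?F ?seeds"
  proof (rule inj_on_imageI2)
    have "?seeds \<subseteq> {(\<sigma>, \<tau>). \<sigma> < p \<and> \<tau> < p \<and> hsh p m \<sigma> \<tau> y = b}"
      by (auto simp: collision_seeds_def)
    then have "inj_on (\<lambda>(\<sigma>, \<tau>). ((\<sigma> * x + \<tau>) mod p, ((\<sigma> * y + \<tau>) mod p) div m)) ?seeds"
      using inj_on_hash_quotients[OF \<open>prime p\<close> \<open>x \<noteq> y\<close> \<open>x < p\<close> \<open>y < p\<close>] by (rule inj_on_subset[rotated])
    then show "inj_on ((\<lambda>(u, v, w). (u, nat v)) \<circ> ?F) ?seeds"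
      by (rule inj_on_cong[THEN iffD1, rotated]) auto
  qed
  moreover have "?F ` ?seeds \<subseteq> Sigma (bucket p m a) Box"
  proof
    fix q assume "q \<in> ?F ` ?seeds"
    then obtain \<sigma> \<tau> where seed: "(\<sigma>, \<tau>) \<in> ?seeds" and q: "q = ?F (\<sigma>, \<tau>)"
      by auto
    have "0 < p"
      using \<open>m < p\<close> by simp
    then have "(\<sigma> * x + \<tau>) mod p \<in> bucket p m a"
      "int (((\<sigma> * y + \<tau>) mod p) div m) \<in> {0..N-1}" "int (((\<sigma> * z + \<tau>) mod p) div m) \<in> {0..N-1}"
      using seed by (auto simp: collision_seeds_def hsh_def bucket_def N_def div_le_mono)
    moreover have "(r * int (((\<sigma> * y + \<tau>) mod p) div m) - s * int (((\<sigma> * z + \<tau>) mod p) div m)) mod int p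
                     = K ((\<sigma> * x + \<tau>) mod p) mod int p"
      unfolding K_def r_def s_def g_def
      using collision_seed_quotients_cong[OF \<open>prime p\<close> \<open>x \<noteq> y\<close> \<open>x < p\<close> \<open>y < p\<close> minv seed] .
    ultimately show "q \<in> Sigma (bucket p m a) Box"
      by (simp add: q Box_def)
  qed
  moreover have "finite (Sigma (bucket p m a) Box)"
    by (rule finite_SigmaI) (auto simp: bucket_def Box_def intro: finite_subset[of _ "{0..N-1} \<times> {0..N-1}"])
  ultimately have "card ?seeds \<le> card (Sigma (bucket p m a) Box)"
    by (rule card_inj_on_le)
  also have "\<dots> = (\<Sum>u\<in>bucket p m a. box_cong_count r s N (int p) (K u))"
    by (subst card_SigmaI) (auto simp: bucket_def Box_def box_cong_count_def
          intro: finite_subset[of _ "{0..N-1} \<times> {0..N-1}"])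
  finally show ?thesis
    unfolding r_def s_def N_def by blast
qed

lemma gcd_ratio_abs_eq:
  fixes d1 d2 :: int
  assumes "d1 \<noteq> 0"
  shows "gcd_ratio (nat \<bar>d1\<bar>) (nat \<bar>d2\<bar>) = 1 / of_int (max \<bar>d1 div gcd d1 d2\<bar> \<bar>d2 div gcd d1 d2\<bar>)"
proof -
  define g where "g = gcd d1 d2"
  have "g > 0"
    using assms by (simp add: g_def)
  have "g * (d1 div g) = d1" "g * (d2 div g) = d2"
    by (simp_all add: g_def)
  then have "\<bar>d1\<bar> = g * \<bar>d1 div g\<bar>" "\<bar>d2\<bar> = g * \<bar>d2 div g\<bar>"
    using \<open>g > 0\<close> by (metis abs_mult abs_of_pos)+
  then have max: "max \<bar>d1\<bar> \<bar>d2\<bar> = g * max \<bar>d1 div g\<bar> \<bar>d2 div g\<bar>"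
    using \<open>g > 0\<close> by (simp add: max_def)
  have "real (max (nat \<bar>d1\<bar>) (nat \<bar>d2\<bar>)) = of_int (max \<bar>d1\<bar> \<bar>d2\<bar>)"
    by (simp add: max_def nat_le_eq_zle)
  moreover have "real (gcd (nat \<bar>d1\<bar>) (nat \<bar>d2\<bar>)) = of_int g"
    by (simp add: g_def)
  ultimately have "gcd_ratio (nat \<bar>d1\<bar>) (nat \<bar>d2\<bar>) = of_int g / (of_int g * of_int (max \<bar>d1 div g\<bar> \<bar>d2 div g\<bar>))"
    by (simp only: gcd_ratio_def max of_int_mult)
  then show ?thesis
    using \<open>g > 0\<close> by (simp add: g_def)
qed

lemma box_cong_bound_le_gcd_ratio:
  fixes d1 d2 :: int
  assumes "d1 \<noteq> 0" and "d2 \<noteq> 0" and "\<bar>d1\<bar> \<le> int U" and "\<bar>d2\<bar> \<le> int U"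
  defines "r \<equiv> d2 div gcd d1 d2" and "s \<equiv> d1 div gcd d1 d2"
  shows "(real n ^ 2 + 2 * (of_int \<bar>r\<bar> + of_int \<bar>s\<bar>) * real n) / real p + real n / of_int (max \<bar>r\<bar> \<bar>s\<bar>) + 1
           \<le> (real n ^ 2 + 4 * real U * real n) / real p + 1 + real n * gcd_ratio (nat \<bar>d1\<bar>) (nat \<bar>d2\<bar>)"
proof -
  have "\<bar>r\<bar> = \<bar>d2\<bar> div gcd d1 d2" "\<bar>s\<bar> = \<bar>d1\<bar> div gcd d1 d2"
    by (simp_all add: r_def s_def abs_div)
  then have "\<bar>r\<bar> \<le> \<bar>d2\<bar>" "\<bar>s\<bar> \<le> \<bar>d1\<bar>"
    using \<open>d1 \<noteq> 0\<close> \<open>d2 \<noteq> 0\<close> by (simp_all add: int_div_le_self)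
  then have "of_int \<bar>r\<bar> + of_int \<bar>s\<bar> \<le> 2 * real U"
    using assms(3,4) by linarith
  then have "(real n ^ 2 + 2 * (of_int \<bar>r\<bar> + of_int \<bar>s\<bar>) * real n) / real p
               \<le> (real n ^ 2 + 4 * real U * real n) / real p"
    by (intro divide_right_mono add_left_mono) (auto intro: mult_right_mono)
  moreover have "real n / of_int (max \<bar>r\<bar> \<bar>s\<bar>) = real n * gcd_ratio (nat \<bar>d1\<bar>) (nat \<bar>d2\<bar>)"
    using gcd_ratio_abs_eq[OF \<open>d1 \<noteq> 0\<close>, of d2] by (simp add: r_def s_def max.commute)
  ultimately show ?thesis
    by linarith
qed

lemma card_collision_seeds_le:
  fixes p m U x y z a b :: nat
  assumes "prime p" and "0 < m" and "m < p" and "U < p"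
    and "x < U" and "y < U" and "z < U" and "x \<noteq> y" and "x \<noteq> z"
  defines "n \<equiv> p div m + 1"
  shows "real (card (collision_seeds p m x a b y z))
           \<le> real (card (bucket p m a)) * ((real n ^ 2 + 4 * real U * real n) / real p + 1
                + real n * gcd_ratio (nat \<bar>int y - int x\<bar>) (nat \<bar>int z - int x\<bar>))"
proof -
  define d1 where "d1 = int y - int x"
  define d2 where "d2 = int z - int x"
  define r where "r = d2 div gcd d1 d2"
  define s where "s = d1 div gcd d1 d2"
  have "d1 \<noteq> 0" "d2 \<noteq> 0" "\<bar>d1\<bar> \<le> int U" "\<bar>d2\<bar> \<le> int U"
    using assms by (auto simp: d1_def d2_def)
  then have "r \<noteq> 0" "s \<noteq> 0"
    by (simp_all add: r_def s_def dvd_div_eq_0_iff)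
  have "coprime r s"
    using div_gcd_coprime[of d2 d1] \<open>d2 \<noteq> 0\<close> by (simp add: r_def s_def gcd.commute)
  obtain K where "card (collision_seeds p m x a b y z) \<le> (\<Sum>u\<in>bucket p m a. box_cong_count r s (int n) (int p) (K u))"
    using card_collision_seeds_le_sum_box_cong_count[where p = p and m = m and x = x and y = y and z = z
        and a = a and b = b] assms
    by (auto simp: r_def s_def d1_def d2_def n_def)
  then have "real (card (collision_seeds p m x a b y z))
               \<le> (\<Sum>u\<in>bucket p m a. real (box_cong_count r s (int n) (int p) (K u)))"
    by (simp flip: of_nat_sum)
  also have "\<dots> \<le> (\<Sum>u\<in>bucket p m a. (real n ^ 2 + 4 * real U * real n) / real p + 1
                     + real n * gcd_ratio (nat \<bar>d1\<bar>) (nat \<bar>d2\<bar>))"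
  proof (rule sum_mono)
    fix u
    have "0 < int p" "1 \<le> int n"
      using \<open>m < p\<close> by (simp_all add: n_def)
    from box_cong_count_le[OF \<open>r \<noteq> 0\<close> \<open>s \<noteq> 0\<close> \<open>coprime r s\<close> this, of "K u"]
    show "real (box_cong_count r s (int n) (int p) (K u))
            \<le> (real n ^ 2 + 4 * real U * real n) / real p + 1 + real n * gcd_ratio (nat \<bar>d1\<bar>) (nat \<bar>d2\<bar>)"
      using box_cong_bound_le_gcd_ratio[OF \<open>d1 \<noteq> 0\<close> \<open>d2 \<noteq> 0\<close> \<open>\<bar>d1\<bar> \<le> int U\<close> \<open>\<bar>d2\<bar> \<le> int U\<close>, of n p]
      by (simp add: r_def s_def)
  qed
  finally show ?thesis
    by (simp add: d1_def d2_def)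
qed

lemma card_collision_quadruples_le:
  fixes U p m x a b :: nat and X :: "nat set"
  assumes "X \<subseteq> {..<U}" and "prime p" and "U < p" and "0 < m" and "m < p" and "x < U" and "x \<notin> X"
  defines "n \<equiv> p div m + 1"
  shows "real (card {(\<sigma>, \<tau>, y, z). \<sigma> \<in> {..<p} \<and> \<tau> \<in> {..<p} \<and> y \<in> X \<and> z \<in> X \<and>
                  hsh p m \<sigma> \<tau> x = a \<and> hsh p m \<sigma> \<tau> y = b \<and> hsh p m \<sigma> \<tau> z = b})
           \<le> real (card (bucket p m a)) * (real (card X) ^ 2 * ((real n ^ 2 + 4 * real U * real n) / real p + 1)
                + real n * (8 * real U * (1 + ln (real U))))"
proof -
  define c where "c = (real n ^ 2 + 4 * real U * real n) / real p + 1"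
  let ?G = "\<lambda>y z. gcd_ratio (nat \<bar>int y - int x\<bar>) (nat \<bar>int z - int x\<bar>)"
  define B where "B = real (card (bucket p m a))"
  have "finite X"
    using \<open>X \<subseteq> {..<U}\<close> finite_subset by blast
  then have "real (card {(\<sigma>, \<tau>, y, z). \<sigma> \<in> {..<p} \<and> \<tau> \<in> {..<p} \<and> y \<in> X \<and> z \<in> X \<and>
                  hsh p m \<sigma> \<tau> x = a \<and> hsh p m \<sigma> \<tau> y = b \<and> hsh p m \<sigma> \<tau> z = b})
          = (\<Sum>y\<in>X. \<Sum>z\<in>X. real (card (collision_seeds p m x a b y z)))"
    using card_collision_quadruples by (simp flip: of_nat_sum)
  also have "\<dots> \<le> (\<Sum>y\<in>X. \<Sum>z\<in>X. B * (c + real n * ?G y z))"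
  proof (intro sum_mono)
    fix y z assume "y \<in> X" "z \<in> X"
    then have "y < U" "z < U" "x \<noteq> y" "x \<noteq> z"
      using \<open>X \<subseteq> {..<U}\<close> \<open>x \<notin> X\<close> by auto
    then show "real (card (collision_seeds p m x a b y z)) \<le> B * (c + real n * ?G y z)"
      using card_collision_seeds_le[OF \<open>prime p\<close> \<open>0 < m\<close> \<open>m < p\<close> \<open>U < p\<close> \<open>x < U\<close>, of y z a b]
      by (simp add: B_def c_def n_def)
  qed
  also have "\<dots> = B * (real (card X) ^ 2 * c + real n * (\<Sum>y\<in>X. \<Sum>z\<in>X. ?G y z))"
    by (simp add: sum.distrib sum_distrib_left power2_eq_square algebra_simps)
  also have "\<dots> \<le> B * (real (card X) ^ 2 * c + real n * (8 * real U * (1 + ln (real U))))"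
    using sum_gcd_ratio_dist_le[OF \<open>X \<subseteq> {..<U}\<close> \<open>x \<notin> X\<close> \<open>x < U\<close>]
    by (intro mult_left_mono add_left_mono) (auto simp: B_def)
  finally show ?thesis
    by (simp add: B_def c_def)
qed

lemma cond_prob_hash_le:
  fixes U p m x a b :: nat and X :: "nat set"
  assumes "X \<subseteq> {..<U}" and "X \<noteq> {}" and "prime p" and "U < p" and "0 < m" and "m < p"
    and "x < U" and "x \<notin> X" and "a < m"
  defines "n \<equiv> p div m + 1" and "k \<equiv> card X"
  shows "cond_prob_hash p m X x a b
           \<le> ((real n ^ 2 + 4 * real U * real n) / real p + 1) / real p
              + real n * (8 * real U * (1 + ln (real U))) / (real p * real k ^ 2)"
proof -
  let ?Num = "{(\<sigma>, \<tau>, y, z). \<sigma> \<in> {..<p} \<and> \<tau> \<in> {..<p} \<and> y \<in> X \<and> z \<in> X \<and>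
                  hsh p m \<sigma> \<tau> x = a \<and> hsh p m \<sigma> \<tau> y = b \<and> hsh p m \<sigma> \<tau> z = b}"
  let ?Den = "{(\<sigma>, \<tau>, y, z). \<sigma> \<in> {..<p} \<and> \<tau> \<in> {..<p} \<and> y \<in> X \<and> z \<in> X \<and> hsh p m \<sigma> \<tau> x = a}"
  define c where "c = (real n ^ 2 + 4 * real U * real n) / real p + 1"
  define B where "B = real (card (bucket p m a))"
  have "finite X"
    using \<open>X \<subseteq> {..<U}\<close> finite_subset by blast
  have "0 < p" "1 \<le> k"
    using \<open>prime p\<close> prime_gt_0_nat \<open>finite X\<close> \<open>X \<noteq> {}\<close> by (auto simp: k_def Suc_le_eq card_gt_0_iff)
  have "a \<in> bucket p m a"
    using \<open>a < m\<close> \<open>m < p\<close> by (simp add: bucket_def)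
  then have "1 \<le> B"
    by (auto simp: B_def bucket_def Suc_le_eq card_gt_0_iff)
  have "p * card (bucket p m a) * card X ^ 2 \<le> card ?Den"
    by (rule card_hash_quadruples_ge[OF \<open>0 < p\<close> \<open>finite X\<close>])
  then have "real (p * card (bucket p m a) * card X ^ 2) \<le> real (card ?Den)"
    by (simp only: of_nat_le_iff)
  then have den: "real p * B * real k ^ 2 \<le> real (card ?Den)"
    by (simp add: B_def k_def)
  have "0 < real p * B * real k ^ 2"
    using \<open>0 < p\<close> \<open>1 \<le> B\<close> \<open>1 \<le> k\<close> by simp
  have num: "real (card ?Num) \<le> B * (real k ^ 2 * c + real n * (8 * real U * (1 + ln (real U))))"
    using card_collision_quadruples_le[OF assms(1,3-8), of a b] by (simp add: B_def c_def k_def n_def)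
  have "cond_prob_hash p m X x a b = real (card ?Num) / real (card ?Den)"
    by (simp add: cond_prob_hash_def)
  also have "\<dots> \<le> real (card ?Num) / (real p * B * real k ^ 2)"
    using den \<open>0 < real p * B * real k ^ 2\<close> by (intro divide_left_mono) auto
  also have "\<dots> \<le> B * (real k ^ 2 * c + real n * (8 * real U * (1 + ln (real U)))) / (real p * B * real k ^ 2)"
    using \<open>0 < real p * B * real k ^ 2\<close> by (intro divide_right_mono[OF num]) simp
  also have "\<dots> = c / real p + real n * (8 * real U * (1 + ln (real U))) / (real p * real k ^ 2)"
    using \<open>0 < p\<close> \<open>1 \<le> B\<close> \<open>1 \<le> k\<close> by (simp add: field_simps)
  finally show ?thesis
    by (simp add: c_def)
qed

lemma hash_error_scale_bounds:
  fixes P m k U :: real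
  assumes "4 * U\<^sup>2 < P" and "1 \<le> m" and "m \<le> U" and "1 \<le> k" and "k \<le> U"
  shows "1 / P \<le> U / (m * k\<^sup>2) / 4" and "1 / (m * U) \<le> U / (m * k\<^sup>2)" and "1 / P \<le> 1 / m"
proof -
  have "1 \<le> U" "0 < P" "U \<le> U\<^sup>2"
    using assms by (auto simp: power2_eq_square intro: order.strict_trans2[of _ "4 * U\<^sup>2"])
  have "m * k\<^sup>2 \<le> U * U\<^sup>2"
    using assms by (intro mult_mono power_mono) auto
  then have "1 / U\<^sup>2 \<le> U / (m * k\<^sup>2)"
    using \<open>1 \<le> U\<close> assms by (simp add: field_simps power2_eq_square)
  have "1 / P \<le> 1 / (4 * U\<^sup>2)"
    using assms \<open>1 \<le> U\<close> \<open>0 < P\<close> by (intro divide_left_mono) auto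
  also have "\<dots> = 1 / U\<^sup>2 / 4"
    by simp
  also have "\<dots> \<le> U / (m * k\<^sup>2) / 4"
    using \<open>1 / U\<^sup>2 \<le> U / (m * k\<^sup>2)\<close> by (rule divide_right_mono) simp
  finally show "1 / P \<le> U / (m * k\<^sup>2) / 4" .
  show "1 / (m * U) \<le> U / (m * k\<^sup>2)"
    using assms \<open>1 \<le> U\<close> power_mono[OF \<open>k \<le> U\<close>, of 2]
    by (simp add: field_simps power2_eq_square mult_left_mono)
  have "m \<le> P"
    using assms \<open>U \<le> U\<^sup>2\<close> by linarith
  then show "1 / P \<le> 1 / m"
    using assms \<open>0 < P\<close> by (intro divide_left_mono) auto
qed

lemma power2_le_of_le_inverse_sum:
  fixes q m P :: real
  assumes "0 \<le> q" and "q \<le> 1 / m + 1 / P" and "1 \<le> m" and "0 < P" and "1 / P \<le> 1 / m"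
  shows "q\<^sup>2 \<le> 1 / m\<^sup>2 + 3 / P"
proof -
  have "1 / m \<le> 1"
    using assms by simp
  then have "1 / P \<le> 1"
    using \<open>1 / P \<le> 1 / m\<close> by linarith
  have "(1 / m) * (1 / P) \<le> 1 * (1 / P)" "(1 / P) * (1 / P) \<le> 1 * (1 / P)"
    using \<open>1 / m \<le> 1\<close> \<open>1 / P \<le> 1\<close> \<open>0 < P\<close> by (intro mult_right_mono; simp)+
  have "q\<^sup>2 \<le> (1 / m + 1 / P)\<^sup>2"
    using \<open>q \<le> 1 / m + 1 / P\<close> \<open>0 \<le> q\<close> by (rule power_mono)
  also have "\<dots> = 1 / m\<^sup>2 + 2 * (1 / m) * (1 / P) + (1 / P) * (1 / P)"
    by (simp add: power2_eq_square algebra_simps)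
  also have "\<dots> \<le> 1 / m\<^sup>2 + 3 / P"
    using \<open>(1 / m) * (1 / P) \<le> 1 * (1 / P)\<close> \<open>(1 / P) * (1 / P) \<le> 1 * (1 / P)\<close> by simp
  finally show ?thesis .
qed

lemma hash_bound_arith:
  fixes P m k U n L :: real
  assumes "4 * U\<^sup>2 < P" and "1 \<le> m" and "m \<le> U" and "1 \<le> k" and "k \<le> U"
    and "0 \<le> n" and "n \<le> P / m + 1" and "1 / 2 \<le> L"
  shows "((n\<^sup>2 + 4 * U * n) / P + 1) / P + n * (8 * U * (1 + L)) / (P * k\<^sup>2)
           \<le> 1 / m\<^sup>2 + 60 * (U * L) / (m * k\<^sup>2)"
proof -
  define e where "e = U / (m * k\<^sup>2)"
  define q where "q = n / P"
  have "1 \<le> U" "0 < P" "0 < e"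
    using assms by (auto simp: e_def intro: order.strict_trans2[of _ "4 * U\<^sup>2"])
  have "1 / P \<le> e / 4" "1 / (m * U) \<le> e" "1 / P \<le> 1 / m"
    using hash_error_scale_bounds[OF assms(1-5)] by (simp_all add: e_def)
  have "0 \<le> q" "q \<le> 1 / m + 1 / P"
    using assms \<open>0 < P\<close> by (simp_all add: q_def field_simps)
  then have "q \<le> 2 / m"
    using \<open>1 / P \<le> 1 / m\<close> by simp
  have "q\<^sup>2 \<le> 1 / m\<^sup>2 + 3 / 4 * e"
    using power2_le_of_le_inverse_sum[OF \<open>0 \<le> q\<close> \<open>q \<le> 1 / m + 1 / P\<close> \<open>1 \<le> m\<close> \<open>0 < P\<close> \<open>1 / P \<le> 1 / m\<close>]
      \<open>1 / P \<le> e / 4\<close> by simp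
  have "4 * U * q / P \<le> 2 * e"
  proof -
    have "4 * U * q / P \<le> 4 * U * (2 / m) / (4 * U\<^sup>2)"
      using \<open>q \<le> 2 / m\<close> \<open>0 \<le> q\<close> \<open>1 \<le> U\<close> assms by (intro frac_le mult_left_mono) auto
    also have "\<dots> = 2 / (m * U)"
      using \<open>1 \<le> U\<close> by (simp add: power2_eq_square field_simps)
    finally show ?thesis
      using \<open>1 / (m * U) \<le> e\<close> by simp
  qed
  have "n * (8 * U * (1 + L)) / (P * k\<^sup>2) \<le> 16 * e + 16 * (L * e)"
  proof -
    have "n * (8 * U * (1 + L)) / (P * k\<^sup>2) = q * (8 * (1 + L)) * (U / k\<^sup>2)"
      by (simp add: q_def field_simps)
    also have "\<dots> \<le> (2 / m) * (8 * (1 + L)) * (U / k\<^sup>2)"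
      using \<open>q \<le> 2 / m\<close> assms \<open>1 \<le> U\<close> by (intro mult_right_mono) auto
    finally show ?thesis
      by (simp add: e_def algebra_simps)
  qed
  have "((n\<^sup>2 + 4 * U * n) / P + 1) / P = q\<^sup>2 + 4 * U * q / P + 1 / P"
    using \<open>0 < P\<close> by (simp add: q_def power2_eq_square field_simps)
  moreover have "19 * e \<le> 38 * (L * e)"
    using assms \<open>0 < e\<close> by simp
  moreover have "60 * (U * L) / (m * k\<^sup>2) = 60 * (L * e)"
    by (simp add: e_def)
  ultimately show ?thesis
    using \<open>q\<^sup>2 \<le> _\<close> \<open>4 * U * q / P \<le> 2 * e\<close> \<open>n * (8 * U * (1 + L)) / (P * k\<^sup>2) \<le> _\<close> \<open>1 / P \<le> e / 4\<close>
      mult_right_mono[OF assms(8), of e] \<open>0 < e\<close>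
    by linarith
qed

lemma cond_prob_hash_le_main:
  fixes U p m x a b :: nat and X :: "nat set"
  assumes "X \<subseteq> {..<U}" and "X \<noteq> {}" and "prime p" and "4 * U\<^sup>2 < p" and "0 < m" and "m \<le> U"
    and "x < U" and "x \<notin> X" and "a < m"
  shows "cond_prob_hash p m X x a b
           \<le> 1 / real m ^ 2 + 60 * (real U * ln (real U)) / (real m * real (card X) ^ 2)"
proof -
  obtain y where "y \<in> X"
    using \<open>X \<noteq> {}\<close> by blast
  then have "y < U" "y \<noteq> x"
    using assms(1,8) by auto
  then have "2 \<le> U"
    using \<open>x < U\<close> by simp
  have "U \<le> U\<^sup>2"
    by (simp add: power2_eq_square le_square)
  then have "U < p"
    using \<open>4 * U\<^sup>2 < p\<close> by linarith
  have "ln 2 \<le> ln (real U)"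
    using \<open>2 \<le> U\<close> by simp
  then have "1 / 2 \<le> ln (real U)"
    using ln2_ge_two_thirds by linarith
  have "1 \<le> card X" "card X \<le> U"
    using assms(1,2) card_mono[OF _ assms(1)] finite_subset by (fastforce simp: Suc_le_eq card_gt_0_iff)+
  have "cond_prob_hash p m X x a b
          \<le> ((real (p div m + 1) ^ 2 + 4 * real U * real (p div m + 1)) / real p + 1) / real p
             + real (p div m + 1) * (8 * real U * (1 + ln (real U))) / (real p * real (card X) ^ 2)"
    using assms \<open>U < p\<close> by (intro cond_prob_hash_le) auto
  also have "\<dots> \<le> 1 / real m ^ 2 + 60 * (real U * ln (real U)) / (real m * real (card X) ^ 2)"
  proof (rule hash_bound_arith)
    show "4 * (real U)\<^sup>2 < real p"
      using \<open>4 * U\<^sup>2 < p\<close> by (metis of_nat_less_iff of_nat_mult of_nat_numeral of_nat_power)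
    show "real (p div m + 1) \<le> real p / real m + 1"
      using of_nat_div_le_of_nat[where 'a = real, of p m] by simp
  qed (use \<open>0 < m\<close> \<open>m \<le> U\<close> \<open>1 \<le> card X\<close> \<open>card X \<le> U\<close> \<open>1 / 2 \<le> ln (real U)\<close> in auto)
  finally show ?thesis .
qed

theorem theorem11p2:
  shows "\<exists>C::real. \<forall>(U::nat) (X::nat set) (p::nat) (m::nat) (x::nat) (a::nat) (b::nat).
     X \<subseteq> {..<U} \<and> X \<noteq> {} \<and> prime p \<and> p > 4 * U^2 \<and> 0 < m \<and> m \<le> U \<and>
     x \<in> {..<U} \<and> x \<notin> X \<and> a < m \<and> b < m \<longrightarrow>
     cond_prob_hash p m X x a b
       \<le> 1 / real m ^ 2 + C * (real U * ln (real U)) / (real m * real (card X) ^ 2)"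
  by (intro exI[of _ 60] allI impI) (use cond_prob_hash_le_main in auto)

end
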